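(* Let $\lambda>0$, $d>0$ be constants and let $q$ be a probability measure on $(0,\infty)$ of the form $q=q_a+\sum_{r^j\in\mathcal D}p^j\delta_{r^j}$, with $q_a$ absolutely continuous w.r.t. Lebesgue measure, $\mathcal D\subset(0,\infty)$ finite, $p^j>0$, and finite mean $T_q=\int r\,q(dr)$. Let $\rho^r\ge0$ be a solution with finite mass $N=\int_0^\infty\rho^rdr>0$ of the stationary equation $\rho^r-\rho^s+\lambda q((s,r])=d\int_{(s,r]}\rho^\alpha d\alpha$ for all $0\le s<r$, and let $R_\rho=\frac1N\int_0^\infty r\rho^r\,dr$ be the mean remaining sentence time. Then $$R_\rho=\frac{T_q}{1-\hat q(d)}-\frac1d,$$ where $\hat q(d)=\int e^{-dx}q(dx)$.
   Context: $\delta_x$ denotes the Dirac measure at $x$. *)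

theory Defs
  imports "HOL-Probability.Probability"
begin

definition laplace_tr :: "real measure \<Rightarrow> real \<Rightarrow> real" where
  "laplace_tr q d = (\<integral>x. exp (- d * x) \<partial>q)"

end

theory Submission
  imports Defs
begin

(* The quantity rho(r) + d * int_r^oo rho - lam * q((r,oo)) does not depend on r >= 0: this is
   the stationary equation integrated over (s,r]. Since the tail integral and q((r,oo)) vanish
   as r -> oo, rho(r) converges to this constant, which must be 0 because rho is integrable;
   hence the tail identity

     rho(r) + d * int_r^oo rho = lam * q((r,oo))      (r >= 0).

   Integrating it against a weight w over [0,oo) and exchanging the order of integration gives
   int w rho + d * int rho(a) W(a) da = lam * int W dq, where W(a) = int_0^a w. The weight w = 1
   gives N + d * int r rho(r) dr = lam * T_q, and w(r) = exp(-d r), for which w + d W = 1 on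
   [0,oo), gives d N = lam * (1 - laplace_tr q d); eliminating lam yields the formula.
   Everything is first done with nonnegative integrals, so that the integrability of r rho(r)
   comes out of the identity for w = 1 instead of being assumed. *)

lemma set_integral_nonneg:
  fixes f :: "'a \<Rightarrow> real"
  assumes "\<And>x. x \<in> A \<Longrightarrow> 0 \<le> f x"
  shows "0 \<le> (LINT x:A|M. f x)"
  unfolding set_lebesgue_integral_def
  by (rule Bochner_Integration.integral_nonneg) (simp add: assms split: split_indicator)

lemma nn_set_integral_eq_set_integral_nonneg:
  fixes f :: "'a \<Rightarrow> real"
  assumes "set_integrable M A f" and "\<And>x. x \<in> A \<Longrightarrow> 0 \<le> f x"
  shows "(\<integral>\<^sup>+x\<in>A. ennreal (f x) \<partial>M) = ennreal (LINT x:A|M. f x)"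
proof -
  have "(\<integral>\<^sup>+x\<in>A. ennreal (f x) \<partial>M) = (\<integral>\<^sup>+x. ennreal (indicator A x *\<^sub>R f x) \<partial>M)"
    by (rule nn_integral_cong) (simp split: split_indicator)
  also have "\<dots> = ennreal (LINT x:A|M. f x)"
    unfolding set_lebesgue_integral_def using assms
    by (intro nn_integral_eq_integral) (auto simp: set_integrable_def split: split_indicator)
  finally show ?thesis .
qed

lemma set_integrable_if_nn_set_integral_finite:
  fixes f :: "'a \<Rightarrow> real"
  assumes "set_borel_measurable M A f" and "\<And>x. x \<in> A \<Longrightarrow> 0 \<le> f x"
    and "(\<integral>\<^sup>+x\<in>A. ennreal (f x) \<partial>M) < \<infinity>"
  shows "set_integrable M A f"
proof -
  have "(\<integral>\<^sup>+x. ennreal (norm (indicator A x *\<^sub>R f x)) \<partial>M) = (\<integral>\<^sup>+x\<in>A. ennreal (f x) \<partial>M)"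
    using assms(2) by (intro nn_integral_cong) (simp split: split_indicator)
  with assms show ?thesis
    by (simp add: set_integrable_def set_borel_measurable_def integrable_iff_bounded)
qed

lemma emeasure_lborel_atLeast: "emeasure lborel {a::real..} = \<infinity>"
proof -
  have "of_nat n \<le> emeasure lborel {a..}" for n
    using emeasure_mono[of "{a..a + real n}" "{a..}" lborel]
    by (simp add: ennreal_of_nat_eq_real_of_nat)
  then have "(SUP n. of_nat n) \<le> emeasure lborel {a..}"
    by (rule SUP_least)
  then show ?thesis
    by (simp add: ennreal_SUP_of_nat_eq_top top_unique)
qed

lemma emeasure_lborel_Ico_zero: "emeasure lborel {0..<a::real} = ennreal a"
  by (cases "a \<ge> 0") (auto simp: ennreal_neg)

lemma set_integrable_nonneg_tendsto_at_top_imp_zero: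
  fixes f :: "real \<Rightarrow> real"
  assumes nonneg: "\<And>x. x \<ge> 0 \<Longrightarrow> f x \<ge> 0" and int: "set_integrable lborel {0..} f"
    and lim: "(f \<longlongrightarrow> L) at_top"
  shows "L = 0"
proof (rule ccontr)
  have "eventually (\<lambda>x. f x \<ge> 0) at_top"
    by (rule eventually_mono[OF eventually_ge_at_top[of 0] nonneg])
  with lim have "L \<ge> 0"
    by (rule tendsto_lowerbound) simp
  moreover assume "L \<noteq> 0"
  ultimately have "L > 0" by simp
  then have "eventually (\<lambda>x. f x > L / 2) at_top"
    using lim by (intro order_tendstoD(1)) auto
  then obtain A0 where A0: "\<And>x. x \<ge> A0 \<Longrightarrow> f x > L / 2"
    by (auto simp: eventually_at_top_linorder)
  define A where "A = max A0 0"
  have "set_integrable lborel {A..} f"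
    using int by (rule set_integrable_subset) (auto simp: A_def)
  then have "set_integrable lborel {A..} (\<lambda>_. L / 2)"
  proof (rule set_integrable_bound)
    show "set_borel_measurable lborel {A..} (\<lambda>_. L / 2)"
      by (simp add: set_borel_measurable_def)
    show "AE x in lborel. x \<in> {A..} \<longrightarrow> norm (L / 2) \<le> norm (f x)"
    proof (intro AE_I2 impI)
      fix x assume "x \<in> {A..}"
      then have "L / 2 < f x"
        using A0 by (simp add: A_def)
      with \<open>L > 0\<close> show "norm (L / 2) \<le> norm (f x)"
        by simp
    qed
  qed
  then have "set_integrable lborel {A..} (\<lambda>_. 1 :: real)"
    using \<open>L > 0\<close> set_integrable_mult_right_iff[of "L / 2" lborel "{A..}" "\<lambda>_. 1"] by simp
  then show False
    by (simp add: set_integrable_def integrable_indicator_iff emeasure_lborel_atLeast)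
qed

lemma tendsto_set_integral_greaterThan_at_top:
  fixes f :: "real \<Rightarrow> real"
  assumes "set_integrable lborel {a..} f"
  shows "((\<lambda>r. LBINT x:{r<..}. f x) \<longlongrightarrow> 0) at_top"
proof -
  define g where "g = (\<lambda>x. indicator {a..} x *\<^sub>R f x)"
  have g_int: "integrable lborel g"
    using assms by (simp add: g_def set_integrable_def)
  have "((\<lambda>r. LBINT x. indicator {r<..} x *\<^sub>R g x) \<longlongrightarrow> (LBINT x::real. 0)) at_top"
  proof (rule integral_dominated_convergence_at_top[OF _ _ integrable_norm[OF g_int]])
    show "AE x in lborel. ((\<lambda>r. indicator {r<..} x *\<^sub>R g x) \<longlongrightarrow> 0) at_top"
    proof (rule AE_I2)
      fix x :: real
      show "((\<lambda>r. indicator {r<..} x *\<^sub>R g x) \<longlongrightarrow> 0) at_top"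
        by (rule tendsto_eventually) (use eventually_gt_at_top[of x] in \<open>eventually_elim, simp\<close>)
    qed
  qed (use g_int in \<open>auto split: split_indicator\<close>)
  moreover have "eventually (\<lambda>r. (LBINT x. indicator {r<..} x *\<^sub>R g x) = (LBINT x:{r<..}. f x)) at_top"
    using eventually_ge_at_top[of a]
    by eventually_elim
       (auto simp: g_def set_lebesgue_integral_def intro!: Bochner_Integration.integral_cong
         split: split_indicator)
  ultimately show ?thesis
    by (simp add: tendsto_cong)
qed

lemma nn_integral_lborel_Ico_exp:
  fixes d :: real
  assumes "d > 0"
  shows "(\<integral>\<^sup>+r\<in>{0..<a}. ennreal (exp (- d * r)) \<partial>lborel) = ennreal ((1 - exp (- d * a)) / d)"
proof (cases "a \<ge> 0")
  case True
  have ftc: "((\<lambda>r. exp (- d * r)) has_integral (- exp (- d * a) / d - - exp (- d * 0) / d)) {0..a}"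
    using True assms
    by (intro fundamental_theorem_of_calculus)
       (auto intro!: derivative_eq_intros simp: has_real_derivative_iff_has_vector_derivative[symmetric])
  have indicator_eq: "(\<lambda>r. indicator {0..a} r * exp (- d * r)) = (\<lambda>r. if r \<in> {0..a} then exp (- d * r) else 0)"
    by (auto simp: fun_eq_iff)
  have "((\<lambda>r. indicator {0..a} r * exp (- d * r)) has_integral ((1 - exp (- d * a)) / d)) UNIV"
    unfolding indicator_eq has_integral_restrict_UNIV using ftc by (simp add: diff_divide_distrib)
  then have "(\<integral>\<^sup>+r. ennreal (indicator {0..a} r * exp (- d * r)) \<partial>lborel) = ennreal ((1 - exp (- d * a)) / d)"
    by (intro nn_integral_has_integral_lborel) simp_all
  moreover have "(\<integral>\<^sup>+r\<in>{0..<a}. ennreal (exp (- d * r)) \<partial>lborel)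
      = (\<integral>\<^sup>+r. ennreal (indicator {0..a} r * exp (- d * r)) \<partial>lborel)"
    by (rule nn_integral_cong_AE)
       (use AE_lborel_singleton[of a] in \<open>eventually_elim, auto split: split_indicator\<close>)
  ultimately show ?thesis by simp
next
  case False
  with assms have "d * a < 0"
    by (simp add: mult_pos_neg)
  with assms have "(1 - exp (- d * a)) / d \<le> 0"
    by (simp add: divide_nonpos_pos)
  with False show ?thesis
    by (simp add: ennreal_neg)
qed

lemma ennreal_exp_plus_primitive:
  fixes d r :: real and x :: ennreal
  assumes "d > 0"
  shows "ennreal (exp (- d * r)) * x * indicator {0..} r + ennreal d * (x * ennreal ((1 - exp (- d * r)) / d))
       = x * indicator {0..} r"
proof (cases "r \<ge> 0")
  case True
  with assms have "exp (- d * r) \<le> 1"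
    by simp
  with assms have "ennreal (exp (- d * r)) + ennreal d * ennreal ((1 - exp (- d * r)) / d) = 1"
    by (simp flip: ennreal_mult ennreal_plus)
  moreover have "ennreal (exp (- d * r)) * x * indicator {0..} r + ennreal d * (x * ennreal ((1 - exp (- d * r)) / d))
      = x * (ennreal (exp (- d * r)) + ennreal d * ennreal ((1 - exp (- d * r)) / d))"
    using True by (simp add: distrib_left mult_ac)
  ultimately show ?thesis
    using True by simp
next
  case False
  with assms have "d * r < 0"
    by (simp add: mult_pos_neg)
  with assms have "(1 - exp (- d * r)) / d \<le> 0"
    by (simp add: divide_nonpos_pos)
  with False show ?thesis
    by (simp add: ennreal_neg)
qed

lemma nn_integral_weighted_tails:
  fixes f w :: "real \<Rightarrow> ennreal" and M :: "real measure"
  assumes "sigma_finite_measure M" and [measurable_cong]: "sets M = sets borel"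
    and [measurable]: "f \<in> borel_measurable borel" "w \<in> borel_measurable borel"
  shows "(\<integral>\<^sup>+r\<in>{0..}. w r * (\<integral>\<^sup>+x\<in>{r<..}. f x \<partial>M) \<partial>lborel)
       = (\<integral>\<^sup>+x. f x * (\<integral>\<^sup>+r\<in>{0..<x}. w r \<partial>lborel) \<partial>M)"
proof -
  interpret M: sigma_finite_measure M by fact
  interpret lborel_M: pair_sigma_finite lborel M
    by (simp add: pair_sigma_finite_def lborel.sigma_finite_measure_axioms M.sigma_finite_measure_axioms)
  have [measurable]: "Measurable.pred (borel \<Otimes>\<^sub>M borel) (\<lambda>x::real \<times> real. fst x \<in> {0..<snd x})"
    unfolding atLeastLessThan_iff by measurable
  have "(\<integral>\<^sup>+r\<in>{0..}. w r * (\<integral>\<^sup>+x\<in>{r<..}. f x \<partial>M) \<partial>lborel)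
      = (\<integral>\<^sup>+r. (\<integral>\<^sup>+x. w r * f x * indicator {0..<x} r \<partial>M) \<partial>lborel)"
    by (subst nn_integral_cmult[symmetric])
       (auto intro!: nn_integral_cong simp: mult_ac split: split_indicator)
  also have "\<dots> = (\<integral>\<^sup>+x. (\<integral>\<^sup>+r. w r * f x * indicator {0..<x} r \<partial>lborel) \<partial>M)"
    by (rule lborel_M.Fubini'[symmetric]) measurable
  also have "\<dots> = (\<integral>\<^sup>+x. f x * (\<integral>\<^sup>+r\<in>{0..<x}. w r \<partial>lborel) \<partial>M)"
    by (subst nn_integral_cmult[symmetric]) (auto intro!: nn_integral_cong simp: mult_ac)
  finally show ?thesis .
qed

lemma weighted_tail_identity:
  fixes f w :: "real \<Rightarrow> ennreal" and q :: "real measure" and c lam :: ennreal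
  assumes q: "sigma_finite_measure q" "sets q = sets borel"
    and [measurable]: "f \<in> borel_measurable borel" "w \<in> borel_measurable borel"
    and tail: "\<And>r. r \<ge> 0 \<Longrightarrow> f r + c * (\<integral>\<^sup>+a\<in>{r<..}. f a \<partial>lborel) = lam * emeasure q {r<..}"
  shows "(\<integral>\<^sup>+r\<in>{0..}. w r * f r \<partial>lborel) + c * (\<integral>\<^sup>+a. f a * (\<integral>\<^sup>+r\<in>{0..<a}. w r \<partial>lborel) \<partial>lborel)
       = lam * (\<integral>\<^sup>+x. (\<integral>\<^sup>+r\<in>{0..<x}. w r \<partial>lborel) \<partial>q)"
proof -
  interpret q: sigma_finite_measure q by (fact q(1))
  have [measurable_cong]: "sets q = sets borel" by (fact q(2))
  have [measurable]: "Measurable.pred (borel \<Otimes>\<^sub>M borel) (\<lambda>x::real \<times> real. snd x \<in> {fst x<..})"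
    unfolding greaterThan_iff by measurable
  have "(\<integral>\<^sup>+r\<in>{0..}. w r * f r \<partial>lborel) + c * (\<integral>\<^sup>+r\<in>{0..}. w r * (\<integral>\<^sup>+a\<in>{r<..}. f a \<partial>lborel) \<partial>lborel)
      = (\<integral>\<^sup>+r. w r * f r * indicator {0..} r
               + c * (w r * (\<integral>\<^sup>+a\<in>{r<..}. f a \<partial>lborel) * indicator {0..} r) \<partial>lborel)"
    by (subst nn_integral_add) (measurable, subst nn_integral_cmult, measurable)
  also have "\<dots> = (\<integral>\<^sup>+r. lam * (w r * (\<integral>\<^sup>+x\<in>{r<..}. 1 \<partial>q) * indicator {0..} r) \<partial>lborel)"
  proof (intro nn_integral_cong)
    fix r :: real
    have "emeasure q {r<..} = (\<integral>\<^sup>+x\<in>{r<..}. 1 \<partial>q)"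
      using q(2) by simp
    then have "w r * (f r + c * (\<integral>\<^sup>+a\<in>{r<..}. f a \<partial>lborel)) * indicator {0..} r
        = lam * (w r * (\<integral>\<^sup>+x\<in>{r<..}. 1 \<partial>q) * indicator {0..} r)"
      by (cases "r \<ge> 0") (simp_all add: tail mult_ac)
    then show "w r * f r * indicator {0..} r + c * (w r * (\<integral>\<^sup>+a\<in>{r<..}. f a \<partial>lborel) * indicator {0..} r)
        = lam * (w r * (\<integral>\<^sup>+x\<in>{r<..}. 1 \<partial>q) * indicator {0..} r)"
      by (simp add: distrib_left distrib_right mult_ac)
  qed
  also have "\<dots> = lam * (\<integral>\<^sup>+r\<in>{0..}. w r * (\<integral>\<^sup>+x\<in>{r<..}. 1 \<partial>q) \<partial>lborel)"
    by (rule nn_integral_cmult) measurable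
  finally show ?thesis
    using nn_integral_weighted_tails[OF lborel.sigma_finite_measure_axioms _ _ \<open>w \<in> _\<close>, of f]
      nn_integral_weighted_tails[OF q _ \<open>w \<in> _\<close>, of "\<lambda>_. 1"]
    by simp
qed

lemma (in real_distribution) measure_greaterThan_tendsto_zero:
  "((\<lambda>r. measure M {r<..}) \<longlongrightarrow> 0) at_top"
proof -
  have "measure M {r<..} = 1 - cdf M r" for r
    using prob_compl[of "{..r}"] by (simp add: cdf_def Compl_eq_Diff_UNIV[symmetric] Compl_atMost)
  then show ?thesis
    using tendsto_diff[OF tendsto_const cdf_lim_at_top_prob, of 1] by simp
qed

locale stationary_solution = real_distribution q for q :: "real measure" +
  fixes lam d :: real and \<rho> :: "real \<Rightarrow> real"
  assumes lam_pos: "lam > 0" and d_pos: "d > 0"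
    and q_nonpos_null: "emeasure q {..0} = 0"
    and \<rho>_measurable [measurable]: "\<rho> \<in> borel_measurable borel"
    and \<rho>_nonneg: "\<And>r. \<rho> r \<ge> 0"
    and \<rho>_integrable: "set_integrable lborel {0..} \<rho>"
    and stationary: "\<And>s r. 0 \<le> s \<Longrightarrow> s < r \<Longrightarrow>
        \<rho> r - \<rho> s + lam * measure q {s<..r} = d * (LBINT a:{s<..r}. \<rho> a)"
begin

lemma AE_q_pos: "AE x in q. 0 < x"
proof -
  have "{..0} \<in> null_sets q"
    using q_nonpos_null by (auto intro: null_setsI)
  from AE_not_in[OF this] show ?thesis
    by (auto elim!: eventually_mono)
qed

lemma set_integrable_\<rho>: "A \<in> sets borel \<Longrightarrow> A \<subseteq> {0..} \<Longrightarrow> set_integrable lborel A \<rho>"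
  using set_integrable_subset[OF \<rho>_integrable] by simp

lemma set_integral_\<rho>_nonneg: "0 \<le> (LBINT a:A. \<rho> a)"
  by (rule set_integral_nonneg) (rule \<rho>_nonneg)

lemma tail_balance_conserved:
  assumes "0 \<le> s" "s \<le> r"
  shows "\<rho> r + d * (LBINT a:{r<..}. \<rho> a) - lam * measure q {r<..}
       = \<rho> s + d * (LBINT a:{s<..}. \<rho> a) - lam * measure q {s<..}"
proof (cases "s = r")
  case False
  have split: "{s<..} = {s<..r} \<union> {r<..}" "{s<..r} \<inter> {r<..} = {}"
    using assms by auto
  have "(LBINT a:{s<..}. \<rho> a) = (LBINT a:{s<..r}. \<rho> a) + (LBINT a:{r<..}. \<rho> a)"
    unfolding split(1) using assms by (intro set_integral_Un split(2) set_integrable_\<rho>) auto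
  moreover have "measure q {s<..} = measure q {s<..r} + measure q {r<..}"
    unfolding split(1) by (intro finite_measure_Union split(2)) auto
  ultimately show ?thesis
    using stationary[of s r] assms False by (simp add: algebra_simps)
qed simp

lemma tail_identity:
  assumes "r \<ge> 0"
  shows "\<rho> r + d * (LBINT a:{r<..}. \<rho> a) = lam * measure q {r<..}"
proof -
  define C where "C = \<rho> 0 + d * (LBINT a:{0<..}. \<rho> a) - lam * measure q {0<..}"
  have "eventually (\<lambda>r. C - d * (LBINT a:{r<..}. \<rho> a) + lam * measure q {r<..} = \<rho> r) at_top"
    using eventually_ge_at_top[of 0]
  proof eventually_elim
    case (elim r)
    then show ?case
      using tail_balance_conserved[of 0 r] by (simp add: C_def algebra_simps)
  qed
  moreover have "((\<lambda>r. C - d * (LBINT a:{r<..}. \<rho> a) + lam * measure q {r<..}) \<longlongrightarrow> C - d * 0 + lam * 0) at_top"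
    by (intro tendsto_intros tendsto_set_integral_greaterThan_at_top[OF \<rho>_integrable]
        measure_greaterThan_tendsto_zero)
  ultimately have "(\<rho> \<longlongrightarrow> C) at_top"
    by (simp add: tendsto_cong)
  then have "C = 0"
    using set_integrable_nonneg_tendsto_at_top_imp_zero[OF _ \<rho>_integrable] by (simp add: \<rho>_nonneg)
  then show ?thesis
    using tail_balance_conserved[of 0 r] assms by (simp add: C_def)
qed

lemma nn_integral_\<rho>: "(\<integral>\<^sup>+r\<in>{0..}. ennreal (\<rho> r) \<partial>lborel) = ennreal (LBINT r:{0..}. \<rho> r)"
  using \<rho>_integrable \<rho>_nonneg by (rule nn_set_integral_eq_set_integral_nonneg)

lemma weighted_balance:
  assumes [measurable]: "w \<in> borel_measurable borel"
  shows "(\<integral>\<^sup>+r\<in>{0..}. w r * ennreal (\<rho> r) \<partial>lborel)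
        + ennreal d * (\<integral>\<^sup>+a. ennreal (\<rho> a) * (\<integral>\<^sup>+r\<in>{0..<a}. w r \<partial>lborel) \<partial>lborel)
       = ennreal lam * (\<integral>\<^sup>+x. (\<integral>\<^sup>+r\<in>{0..<x}. w r \<partial>lborel) \<partial>q)"
proof (rule weighted_tail_identity)
  show "sigma_finite_measure q"
    by (rule sigma_finite_measure_axioms)
  fix r :: real
  assume "r \<ge> 0"
  then have "(\<integral>\<^sup>+a\<in>{r<..}. ennreal (\<rho> a) \<partial>lborel) = ennreal (LBINT a:{r<..}. \<rho> a)"
    by (intro nn_set_integral_eq_set_integral_nonneg set_integrable_\<rho> \<rho>_nonneg) auto
  moreover have "ennreal (\<rho> r + d * (LBINT a:{r<..}. \<rho> a)) = ennreal (lam * measure q {r<..})"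
    using tail_identity[OF \<open>r \<ge> 0\<close>] by simp
  ultimately show "ennreal (\<rho> r) + ennreal d * (\<integral>\<^sup>+a\<in>{r<..}. ennreal (\<rho> a) \<partial>lborel) = ennreal lam * emeasure q {r<..}"
    using d_pos lam_pos \<rho>_nonneg[of r] set_integral_\<rho>_nonneg[of "{r<..}"]
    by (simp add: emeasure_eq_measure ennreal_mult)
qed simp_all

lemma first_moment_balance:
  assumes mean: "integrable q (\<lambda>x. x)"
  shows "set_integrable lborel {0..} (\<lambda>r. r * \<rho> r)"
    and "(LBINT r:{0..}. \<rho> r) + d * (LBINT r:{0..}. r * \<rho> r) = lam * (\<integral>x. x \<partial>q)"
proof -
  define I where "I = (\<integral>\<^sup>+r\<in>{0..}. ennreal (r * \<rho> r) \<partial>lborel)"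
  have "(\<integral>\<^sup>+a. ennreal (\<rho> a) * ennreal a \<partial>lborel) = I"
    unfolding I_def
    by (intro nn_integral_cong) (auto simp: ennreal_mult' ennreal_neg mult.commute split: split_indicator)
  moreover have mean_nonneg: "AE x in q. 0 \<le> x"
    using AE_q_pos by (auto elim: eventually_mono)
  then have "(\<integral>\<^sup>+x. ennreal x \<partial>q) = ennreal (\<integral>x. x \<partial>q)"
    by (rule nn_integral_eq_integral[OF mean])
  ultimately have balance: "ennreal (LBINT r:{0..}. \<rho> r) + ennreal d * I = ennreal lam * ennreal (\<integral>x. x \<partial>q)"
    using weighted_balance[of "\<lambda>_. 1"] by (simp add: emeasure_lborel_Ico_zero nn_integral_\<rho>)
  have "I \<noteq> \<infinity>"
  proof
    assume "I = \<infinity>"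
    with balance d_pos lam_pos show False
      by (simp add: ennreal_mult_top ennreal_mult'[symmetric])
  qed
  then show integrable: "set_integrable lborel {0..} (\<lambda>r. r * \<rho> r)"
    unfolding I_def
    by (intro set_integrable_if_nn_set_integral_finite)
       (auto simp: set_borel_measurable_def \<rho>_nonneg top.not_eq_extremum)
  have "I = ennreal (LBINT r:{0..}. r * \<rho> r)"
    unfolding I_def using integrable by (rule nn_set_integral_eq_set_integral_nonneg) (simp add: \<rho>_nonneg)
  moreover have "0 \<le> (LBINT r:{0..}. r * \<rho> r)"
    by (rule set_integral_nonneg) (simp add: \<rho>_nonneg)
  moreover have "0 \<le> (\<integral>x. x \<partial>q)"
    using mean_nonneg by (rule integral_nonneg_AE)
  ultimately have "ennreal ((LBINT r:{0..}. \<rho> r) + d * (LBINT r:{0..}. r * \<rho> r)) = ennreal (lam * (\<integral>x. x \<partial>q))"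
    using balance d_pos lam_pos set_integral_\<rho>_nonneg by (simp add: ennreal_mult)
  then show "(LBINT r:{0..}. \<rho> r) + d * (LBINT r:{0..}. r * \<rho> r) = lam * (\<integral>x. x \<partial>q)"
    using \<open>0 \<le> (LBINT r:{0..}. r * \<rho> r)\<close> \<open>0 \<le> (\<integral>x. x \<partial>q)\<close> d_pos lam_pos set_integral_\<rho>_nonneg
    by (subst (asm) ennreal_inj) auto
qed

lemma nn_integral_laplace_weight:
  shows "(\<integral>\<^sup>+x. ennreal ((1 - exp (- d * x)) / d) \<partial>q) = ennreal ((1 - laplace_tr q d) / d)"
    and "laplace_tr q d \<le> 1"
proof -
  have "AE x in q. norm (exp (- d * x)) \<le> 1"
    using AE_q_pos by eventually_elim (use d_pos in \<open>simp add: zero_le_mult_iff\<close>)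
  then have "integrable q (\<lambda>x. exp (- d * x))"
    by (intro integrable_const_bound[where B = 1]) auto
  then have integrable: "integrable q (\<lambda>x. (1 - exp (- d * x)) / d)"
    and integral: "(\<integral>x. (1 - exp (- d * x)) / d \<partial>q) = (1 - laplace_tr q d) / d"
    using prob_space by (auto simp: laplace_tr_def diff_divide_distrib space_eq_univ)
  have nonneg: "AE x in q. 0 \<le> (1 - exp (- d * x)) / d"
    using AE_q_pos by eventually_elim (use d_pos in \<open>simp add: zero_le_mult_iff\<close>)
  show "(\<integral>\<^sup>+x. ennreal ((1 - exp (- d * x)) / d) \<partial>q) = ennreal ((1 - laplace_tr q d) / d)"
    unfolding integral[symmetric] using integrable nonneg by (rule nn_integral_eq_integral)
  have "0 \<le> (1 - laplace_tr q d) / d"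
    unfolding integral[symmetric] using nonneg by (rule integral_nonneg_AE)
  with d_pos show "laplace_tr q d \<le> 1"
    by (simp add: zero_le_divide_iff)
qed

lemma laplace_balance: "d * (LBINT r:{0..}. \<rho> r) = lam * (1 - laplace_tr q d)"
proof -
  have "ennreal (LBINT r:{0..}. \<rho> r)
      = (\<integral>\<^sup>+r. ennreal (exp (- d * r)) * ennreal (\<rho> r) * indicator {0..} r
               + ennreal d * (ennreal (\<rho> r) * ennreal ((1 - exp (- d * r)) / d)) \<partial>lborel)"
    unfolding nn_integral_\<rho>[symmetric] ennreal_exp_plus_primitive[OF d_pos] ..
  also have "\<dots> = (\<integral>\<^sup>+r\<in>{0..}. ennreal (exp (- d * r)) * ennreal (\<rho> r) \<partial>lborel)
        + ennreal d * (\<integral>\<^sup>+a. ennreal (\<rho> a) * ennreal ((1 - exp (- d * a)) / d) \<partial>lborel)"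
    by (subst nn_integral_add) (measurable, subst nn_integral_cmult, measurable)
  also have "\<dots> = ennreal lam * ennreal ((1 - laplace_tr q d) / d)"
  proof -
    have "(\<lambda>r. ennreal (exp (- d * r))) \<in> borel_measurable borel"
      by measurable
    from weighted_balance[OF this] show ?thesis
      unfolding nn_integral_lborel_Ico_exp[OF d_pos] nn_integral_laplace_weight(1) .
  qed
  also have "\<dots> = ennreal (lam * ((1 - laplace_tr q d) / d))"
    using lam_pos d_pos nn_integral_laplace_weight(2) by (intro ennreal_mult[symmetric]) auto
  finally have "ennreal (LBINT r:{0..}. \<rho> r) = ennreal (lam * ((1 - laplace_tr q d) / d))" .
  moreover have "0 \<le> lam * ((1 - laplace_tr q d) / d)"
    using lam_pos d_pos nn_integral_laplace_weight(2) by simp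
  ultimately have "(LBINT r:{0..}. \<rho> r) = lam * ((1 - laplace_tr q d) / d)"
    using set_integral_\<rho>_nonneg by simp
  with d_pos show ?thesis
    by (simp add: field_simps)
qed

lemma mean_remaining_time:
  assumes "integrable q (\<lambda>x. x)" and "(LBINT r:{0..}. \<rho> r) > 0"
  shows "(LBINT r:{0..}. r * \<rho> r) / (LBINT r:{0..}. \<rho> r) = (\<integral>x. x \<partial>q) / (1 - laplace_tr q d) - 1 / d"
proof -
  have laplace: "1 - laplace_tr q d = d * (LBINT r:{0..}. \<rho> r) / lam"
    using laplace_balance lam_pos by (simp add: field_simps)
  have moment: "(LBINT r:{0..}. r * \<rho> r) = (lam * (\<integral>x. x \<partial>q) - (LBINT r:{0..}. \<rho> r)) / d"
    using first_moment_balance(2)[OF assms(1)] d_pos by (simp add: field_simps)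
  show ?thesis
    unfolding laplace moment using assms(2) d_pos lam_pos by (simp add: field_simps)
qed

end

lemma stationary_solution_zero_extension:
  fixes lam d :: real and q :: "real measure" and \<rho> :: "real \<Rightarrow> real"
  assumes "prob_space q" "sets q = sets borel" "lam > 0" "d > 0" "emeasure q {..0} = 0"
    and nonneg: "\<And>r. r \<ge> 0 \<Longrightarrow> \<rho> r \<ge> 0" and integrable: "set_integrable lborel {0..} \<rho>"
    and stationary: "\<And>s r. 0 \<le> s \<Longrightarrow> s < r \<Longrightarrow>
        \<rho> r - \<rho> s + lam * measure q {s<..r} = d * (LBINT a:{s<..r}. \<rho> a)"
  shows "stationary_solution q lam d (\<lambda>r. indicator {0..} r * \<rho> r)"
proof (intro stationary_solution.intro stationary_solution_axioms.intro)
  show "real_distribution q"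
    using assms(1,2) by (simp add: real_distribution_def real_distribution_axioms_def)
  show "(\<lambda>r. indicator {0..} r * \<rho> r) \<in> borel_measurable borel"
    using borel_measurable_integrable[OF integrable[unfolded set_integrable_def]] by simp
  show "set_integrable lborel {0..} (\<lambda>r. indicator {0..} r * \<rho> r)"
    using integrable by (rule set_integrable_cong[THEN iffD1, rotated -1]) auto
  fix s r :: real
  assume "0 \<le> s" "s < r"
  moreover have "(LBINT a:{s<..r}. indicator {0..} a * \<rho> a) = (LBINT a:{s<..r}. \<rho> a)"
    using \<open>0 \<le> s\<close> by (intro set_lebesgue_integral_cong) auto
  ultimately show "indicator {0..} r * \<rho> r - indicator {0..} s * \<rho> s + lam * measure q {s<..r}
      = d * (LBINT a:{s<..r}. indicator {0..} a * \<rho> a)"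
    using stationary[of s r] by simp
qed (use assms(3-5) nonneg in \<open>simp_all split: split_indicator\<close>)

theorem proposition2p5:
  fixes lam d :: real
    and q qa :: "real measure"
    and D :: "real set"
    and p :: "real \<Rightarrow> real"
    and \<rho> :: "real \<Rightarrow> real"
  assumes lam_pos: "lam > 0" and d_pos: "d > 0"
    and q_prob: "prob_space q" and q_sets: "sets q = sets borel"
    and q_support: "emeasure q {..0} = 0"
    and qa_sets: "sets qa = sets borel"
    and qa_ac: "absolutely_continuous lborel qa"
    and D_fin: "finite D" and D_pos: "D \<subseteq> {0<..}"
    and p_pos: "\<And>x. x \<in> D \<Longrightarrow> p x > 0"
    and q_decomp: "\<And>A. A \<in> sets borel \<Longrightarrow>
        emeasure q A = emeasure qa A + (\<Sum>x\<in>D. ennreal (p x) * indicator A x)"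
    and q_mean: "integrable q (\<lambda>r. r)"
    and \<rho>_nonneg: "\<And>r. r \<ge> 0 \<Longrightarrow> \<rho> r \<ge> 0"
    and \<rho>_int: "set_integrable lborel {0..} \<rho>"
    and N_pos: "(LBINT r:{0..}. \<rho> r) > 0"
    and stationary: "\<And>s r. 0 \<le> s \<Longrightarrow> s < r \<Longrightarrow>
        \<rho> r - \<rho> s + lam * measure q {s<..r} = d * (LBINT a:{s<..r}. \<rho> a)"
  shows "set_integrable lborel {0..} (\<lambda>r. r * \<rho> r)
     \<and> (LBINT r:{0..}. r * \<rho> r) / (LBINT r:{0..}. \<rho> r)
         = (\<integral>r. r \<partial>q) / (1 - laplace_tr q d) - 1 / d"
proof -
  (* Extending rho by 0 to the negative reals makes it measurable and nonnegative everywhere. *)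
  interpret stationary_solution q lam d "\<lambda>r. indicator {0..} r * \<rho> r"
    using q_prob q_sets lam_pos d_pos q_support \<rho>_nonneg \<rho>_int stationary
    by (rule stationary_solution_zero_extension)
  have mass: "(LBINT r:{0..}. indicator {0..} r * \<rho> r) = (LBINT r:{0..}. \<rho> r)"
    and moment: "(LBINT r:{0..}. r * (indicator {0..} r * \<rho> r)) = (LBINT r:{0..}. r * \<rho> r)"
    by (auto intro!: set_lebesgue_integral_cong)
  have "set_integrable lborel {0..} (\<lambda>r. r * \<rho> r)"
    using first_moment_balance(1)[OF q_mean] by (rule set_integrable_cong[THEN iffD1, rotated -1]) auto
  moreover have "(LBINT r:{0..}. r * \<rho> r) / (LBINT r:{0..}. \<rho> r) = (\<integral>r. r \<partial>q) / (1 - laplace_tr q d) - 1 / d"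
    using mean_remaining_time[OF q_mean] N_pos unfolding mass moment by simp
  ultimately show ?thesis ..
qed

end
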